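(* Let $\mathcal T=(T,\lambda)$ be a temporal oriented tree with connectivity graph $G$, and let $H$ be an induced cycle of $G$ of length at least $4$. Then for every vertex $v\in V(H)$ and every arc $a$ of $T$ incident with $v$, all vertices of $V(H)\setminus\{v\}$ lie in the same connected component of $T\setminus\{a\}$ (the forest obtained from $T$ by deleting the arc $a$).
   Context: A temporal digraph is a pair $(D,\lambda)$ with $D=(V,A)$ a finite digraph and $\lambda:A\to 2^{\{1,\dots,t_{\max}\}}$ giving the time-steps at which each arc is active. A temporal oriented tree $\mathcal T=(T,\lambda)$ is one whose underlying digraph $T$ is an orientation of a tree. A temporal path is a sequence $(v_1,v_2,t_1),\dots,(v_{k-1},v_k,t_{k-1})$ with pairwise distinct $v_i$, $\overrightarrow{v_iv_{i+1}}\in A$, $t_i\in\lambda(\overrightarrow{v_iv_{i+1}})$ and $t_1<\dots<t_{k-1}$. Two vertices $u\ne v$ are temporally connected if there is a temporal path from $u$ to $v$ or from $v$ to $u$. The connectivity graph of $\mathcal T$ is the undirected graph $G$ with $V(G)=V(T)$ and $uv\in E(G)$ iff $u\neq v$ and $u,v$ are temporally connected. *)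

theory Defs
  imports Main
begin

definition temporal_digraph ::
  "'a set \<Rightarrow> ('a \<times> 'a) set \<Rightarrow> ('a \<times> 'a \<Rightarrow> nat set) \<Rightarrow> nat \<Rightarrow> bool" where
  "temporal_digraph V A lam tmax \<longleftrightarrow>
     finite V \<and> A \<subseteq> V \<times> V \<and> (\<forall>a\<in>A. lam a \<subseteq> {1..tmax})"

definition und :: "('a \<times> 'a) set \<Rightarrow> ('a \<times> 'a) set" where
  "und A = A \<union> A\<inverse>"

definition is_cycle :: "('a \<times> 'a) set \<Rightarrow> 'a list \<Rightarrow> bool" where
  "is_cycle E cs \<longleftrightarrow> length cs \<ge> 3 \<and> distinct cs \<and>
     (\<forall>i < length cs. (cs ! i, cs ! ((i + 1) mod length cs)) \<in> E)"

definition underlying_tree :: "'a set \<Rightarrow> ('a \<times> 'a) set \<Rightarrow> bool" where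
  "underlying_tree V A \<longleftrightarrow> V \<noteq> {} \<and>
     (\<forall>u\<in>V. \<forall>v\<in>V. (u, v) \<in> (und A)\<^sup>*) \<and>
     \<not> (\<exists>cs. set cs \<subseteq> V \<and> is_cycle (und A) cs)"

definition oriented_tree :: "'a set \<Rightarrow> ('a \<times> 'a) set \<Rightarrow> bool" where
  "oriented_tree V A \<longleftrightarrow> (\<forall>v. (v, v) \<notin> A) \<and> (\<forall>u v. (u, v) \<in> A \<longrightarrow> (v, u) \<notin> A) \<and>
     underlying_tree V A"

definition temporal_oriented_tree ::
  "'a set \<Rightarrow> ('a \<times> 'a) set \<Rightarrow> ('a \<times> 'a \<Rightarrow> nat set) \<Rightarrow> nat \<Rightarrow> bool" where
  "temporal_oriented_tree V A lam tmax \<longleftrightarrow> temporal_digraph V A lam tmax \<and> oriented_tree V A"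

definition temporal_path ::
  "('a \<times> 'a) set \<Rightarrow> ('a \<times> 'a \<Rightarrow> nat set) \<Rightarrow> 'a list \<Rightarrow> nat list \<Rightarrow> bool" where
  "temporal_path A lam vs ts \<longleftrightarrow> vs \<noteq> [] \<and> length ts = length vs - 1 \<and> distinct vs \<and>
     (\<forall>i < length ts. (vs ! i, vs ! Suc i) \<in> A \<and> ts ! i \<in> lam (vs ! i, vs ! Suc i)) \<and>
     sorted_wrt (<) ts"

definition has_temporal_path ::
  "('a \<times> 'a) set \<Rightarrow> ('a \<times> 'a \<Rightarrow> nat set) \<Rightarrow> 'a \<Rightarrow> 'a \<Rightarrow> bool" where
  "has_temporal_path A lam u v \<longleftrightarrow>
     (\<exists>vs ts. temporal_path A lam vs ts \<and> hd vs = u \<and> last vs = v)"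

definition temporally_connected ::
  "('a \<times> 'a) set \<Rightarrow> ('a \<times> 'a \<Rightarrow> nat set) \<Rightarrow> 'a \<Rightarrow> 'a \<Rightarrow> bool" where
  "temporally_connected A lam u v \<longleftrightarrow>
     u \<noteq> v \<and> (has_temporal_path A lam u v \<or> has_temporal_path A lam v u)"

definition conn_graph_edges ::
  "'a set \<Rightarrow> ('a \<times> 'a) set \<Rightarrow> ('a \<times> 'a \<Rightarrow> nat set) \<Rightarrow> ('a \<times> 'a) set" where
  "conn_graph_edges V A lam = {(u, v). u \<in> V \<and> v \<in> V \<and> temporally_connected A lam u v}"

definition induced_cycle :: "'a set \<Rightarrow> ('a \<times> 'a) set \<Rightarrow> 'a list \<Rightarrow> bool" where
  "induced_cycle V E cs \<longleftrightarrow> set cs \<subseteq> V \<and> is_cycle E cs \<and>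
     (\<forall>i < length cs. \<forall>j < length cs. (cs ! i, cs ! j) \<in> E \<longrightarrow>
        j = (i + 1) mod length cs \<or> i = (j + 1) mod length cs)"

end

theory Submission
  imports Defs
begin

text \<open>Let \<open>a\<close> be an arc at the cycle vertex \<open>v\<close>. Two vertices consecutive on \<open>H\<close> and
  different from \<open>v\<close> are joined by a temporal path. If that path avoids \<open>v\<close>, it avoids \<open>a\<close>;
  otherwise both ends are temporally connected to \<open>v\<close>, so two consecutive vertices of an induced
  cycle of length at least 4 would have the common neighbour \<open>v\<close>, which is impossible. Hence the
  path \<open>H - v\<close> runs inside one component of \<open>T - a\<close>.\<close>

lemma rtrancl_chain:
  assumes step: "\<And>k. lo \<le> k \<Longrightarrow> k < hi \<Longrightarrow> (f k, f (Suc k)) \<in> R\<^sup>*"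
    and "lo \<le> i" "i \<le> j" "j \<le> hi"
  shows "(f i, f j) \<in> R\<^sup>*"
  using \<open>i \<le> j\<close> \<open>j \<le> hi\<close>
proof (induction j rule: dec_induct)
  case (step k)
  have "(f i, f k) \<in> R\<^sup>*" using step by simp
  moreover have "(f k, f (Suc k)) \<in> R\<^sup>*"
    using assms(1) \<open>lo \<le> i\<close> \<open>i \<le> k\<close> \<open>Suc k \<le> hi\<close> by simp
  ultimately show ?case by (rule rtrancl_trans)
qed simp

lemma sym_und: "sym (und A)"
  unfolding und_def by (rule sym_Un_converse)

lemma temporally_connected_sym:
  "temporally_connected A lam u v \<longleftrightarrow> temporally_connected A lam v u"
  unfolding temporally_connected_def by blast

lemma temporal_path_avoiding_arc:
  assumes tp: "temporal_path A lam vs ts" and v: "v = fst a \<or> v = snd a" and "v \<notin> set vs"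
  shows "(hd vs, last vs) \<in> (und (A - {a}))\<^sup>*"
proof -
  have ne: "vs \<noteq> []" and len: "length ts = length vs - 1"
    and arcs: "\<And>k. k < length ts \<Longrightarrow> (vs ! k, vs ! Suc k) \<in> A"
    using tp unfolding temporal_path_def by auto
  have "(vs ! k, vs ! Suc k) \<in> (und (A - {a}))\<^sup>*" if "k < length vs - 1" for k
  proof -
    have "vs ! k \<noteq> v" "vs ! Suc k \<noteq> v" using \<open>v \<notin> set vs\<close> that by auto
    then have "(vs ! k, vs ! Suc k) \<noteq> a" using v by auto
    with arcs[of k] that len have "(vs ! k, vs ! Suc k) \<in> und (A - {a})"
      unfolding und_def by simp
    then show ?thesis by (rule r_into_rtrancl)
  qed
  from rtrancl_chain[of 0 "length vs - 1" "(!) vs", OF this]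
  show ?thesis using ne by (simp add: hd_conv_nth last_conv_nth)
qed

lemma temporal_path_through:
  assumes tp: "temporal_path A lam vs ts" and "v \<in> set vs"
  shows "has_temporal_path A lam (hd vs) v \<and> has_temporal_path A lam v (last vs)"
proof -
  obtain j where j: "j < length vs" "vs ! j = v" using \<open>v \<in> set vs\<close> by (auto simp: in_set_conv_nth)
  have "temporal_path A lam (take (Suc j) vs) (take j ts)"
    and "temporal_path A lam (drop j vs) (drop j ts)"
    using tp j unfolding temporal_path_def by auto
  moreover have "hd (take (Suc j) vs) = hd vs" using j by (cases vs) auto
  moreover have "last (take (Suc j) vs) = v" using j by (simp add: take_Suc_conv_app_nth)
  moreover have "hd (drop j vs) = v" "last (drop j vs) = last vs"
    using j by (auto simp: hd_drop_conv_nth)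
  ultimately show ?thesis unfolding has_temporal_path_def by metis
qed

lemma temporally_connected_avoiding_or_through:
  assumes tc: "temporally_connected A lam x y" and v: "v = fst a \<or> v = snd a"
    and "x \<noteq> v" "y \<noteq> v"
  shows "(x, y) \<in> (und (A - {a}))\<^sup>* \<or>
    temporally_connected A lam x v \<and> temporally_connected A lam y v"
proof -
  have "(u, w) \<in> (und (A - {a}))\<^sup>* \<or> has_temporal_path A lam u v \<and> has_temporal_path A lam v w"
    if "has_temporal_path A lam u w" for u w
  proof -
    obtain vs ts where "temporal_path A lam vs ts" "hd vs = u" "last vs = w"
      using \<open>has_temporal_path A lam u w\<close> unfolding has_temporal_path_def by auto
    then show ?thesis
      using temporal_path_avoiding_arc[OF _ v] temporal_path_through by metis
  qed
  moreover have "(y, x) \<in> (und (A - {a}))\<^sup>* \<Longrightarrow> (x, y) \<in> (und (A - {a}))\<^sup>*"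
    using sym_rtrancl[OF sym_und] by (metis symD)
  ultimately show ?thesis
    using tc \<open>x \<noteq> v\<close> \<open>y \<noteq> v\<close> unfolding temporally_connected_def by blast
qed

lemma induced_cycle_no_common_neighbour:
  assumes ic: "induced_cycle V E cs" and n: "4 \<le> length cs"
    and p: "p < length cs" and i: "i < length cs" "i \<noteq> p" "Suc i mod length cs \<noteq> p"
    and "(cs ! p, cs ! i) \<in> E" "(cs ! p, cs ! (Suc i mod length cs)) \<in> E"
  shows False
proof -
  let ?n = "length cs"
  have adj: "j = Suc k mod ?n \<or> k = Suc j mod ?n" if "k < ?n" "j < ?n" "(cs ! k, cs ! j) \<in> E" for k j
    using ic that unfolding induced_cycle_def by auto
  have "Suc i mod ?n < ?n" by (rule mod_less_divisor) (use p in linarith)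
  have "i = Suc p mod ?n \<or> p = Suc i mod ?n"
    using adj[OF p i(1)] assms(7) by blast
  moreover have "Suc i mod ?n = Suc p mod ?n \<or> p = Suc (Suc i mod ?n) mod ?n"
    using adj[OF p \<open>Suc i mod ?n < ?n\<close> assms(8)] by blast
  ultimately show False
    using i p n by (auto simp: mod_Suc split: if_splits)
qed

lemma cycle_minus_vertex_rtrancl:
  assumes "sym R" and p: "p < length cs"
    and step: "\<And>i. i < length cs \<Longrightarrow> i \<noteq> p \<Longrightarrow> Suc i mod length cs \<noteq> p \<Longrightarrow>
      (cs ! i, cs ! (Suc i mod length cs)) \<in> R\<^sup>*"
    and x: "x \<in> set cs - {cs ! p}" and y: "y \<in> set cs - {cs ! p}"
  shows "(x, y) \<in> R\<^sup>*"
proof -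
  let ?n = "length cs"
  \<comment> \<open>\<open>f 1, \<dots>, f (n - 1)\<close> runs once around the cycle, starting right after position \<open>p\<close>.\<close>
  define f where "f k = cs ! ((p + k) mod ?n)" for k
  have shift_neq: "(p + d) mod ?n \<noteq> p" if "0 < d" "d < ?n" for d
  proof (cases "p + d < ?n")
    case False
    then have "(p + d) mod ?n = p + d - ?n" using p that(2) by (simp add: le_mod_geq)
    then show ?thesis using False that(2) by simp
  qed (use that in simp)
  have chain: "(f k, f (Suc k)) \<in> R\<^sup>*" if "1 \<le> k" "k < ?n - 1" for k
  proof -
    have "(p + k) mod ?n < ?n" by (rule mod_less_divisor) (use p in linarith)
    moreover have "(p + k) mod ?n \<noteq> p" "(p + Suc k) mod ?n \<noteq> p"
      using shift_neq[of k] shift_neq[of "Suc k"] that by auto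
    moreover have "Suc ((p + k) mod ?n) mod ?n = (p + Suc k) mod ?n"
      by (simp add: mod_Suc_eq)
    ultimately show ?thesis using step unfolding f_def by metis
  qed
  have index: "\<exists>k. 1 \<le> k \<and> k \<le> ?n - 1 \<and> w = f k" if w: "w \<in> set cs - {cs ! p}" for w
  proof -
    obtain i where i: "i < ?n" "cs ! i = w" using w by (auto simp: in_set_conv_nth)
    with w have "i \<noteq> p" by auto
    define k where "k = (if p < i then i - p else ?n - p + i)"
    have "p + k = (if p < i then i else ?n + i)" using p unfolding k_def by auto
    then have "(p + k) mod ?n = i" using i(1) by auto
    moreover have "1 \<le> k \<and> k \<le> ?n - 1" using i(1) \<open>i \<noteq> p\<close> p unfolding k_def by auto
    ultimately show ?thesis using i(2) unfolding f_def by metis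
  qed
  have sym_star: "(u, w) \<in> R\<^sup>*" if "(w, u) \<in> R\<^sup>*" for u w
    using sym_rtrancl[OF \<open>sym R\<close>] that by (metis symD)
  obtain kx ky where "1 \<le> kx" "kx \<le> ?n - 1" "x = f kx" "1 \<le> ky" "ky \<le> ?n - 1" "y = f ky"
    using index[OF x] index[OF y] by blast
  then show ?thesis
    using rtrancl_chain[of 1 "?n - 1" f R, OF chain] sym_star by (metis nat_le_linear)
qed

lemma induced_conn_cycle_consecutive_rtrancl:
  assumes ic: "induced_cycle V (conn_graph_edges V A lam) cs" and n: "4 \<le> length cs"
    and p: "p < length cs" and v: "cs ! p = fst a \<or> cs ! p = snd a"
    and i: "i < length cs" "i \<noteq> p" "Suc i mod length cs \<noteq> p"
  shows "(cs ! i, cs ! (Suc i mod length cs)) \<in> (und (A - {a}))\<^sup>*"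
proof -
  let ?j = "Suc i mod length cs"
  have "?j < length cs" by (rule mod_less_divisor) (use i(1) in linarith)
  have inV: "set cs \<subseteq> V" and "distinct cs"
    and "(cs ! i, cs ! ?j) \<in> conn_graph_edges V A lam"
    using ic i(1) unfolding induced_cycle_def is_cycle_def by auto
  then have tc: "temporally_connected A lam (cs ! i) (cs ! ?j)"
    unfolding conn_graph_edges_def by simp
  have "cs ! i \<noteq> cs ! p" "cs ! ?j \<noteq> cs ! p"
    using \<open>distinct cs\<close> \<open>?j < length cs\<close> i p by (auto simp: nth_eq_iff_index_eq)
  note through = temporally_connected_avoiding_or_through[OF tc v this]
  have "\<not> (temporally_connected A lam (cs ! i) (cs ! p) \<and>
      temporally_connected A lam (cs ! ?j) (cs ! p))"
  proof
    assume "temporally_connected A lam (cs ! i) (cs ! p) \<and>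
      temporally_connected A lam (cs ! ?j) (cs ! p)"
    then have "(cs ! p, cs ! i) \<in> conn_graph_edges V A lam"
      "(cs ! p, cs ! ?j) \<in> conn_graph_edges V A lam"
      using inV i p \<open>?j < length cs\<close> unfolding conn_graph_edges_def
      by (auto simp: temporally_connected_sym)
    then show False using induced_cycle_no_common_neighbour[OF ic n p i] by blast
  qed
  then show ?thesis using through by blast
qed

theorem mainTheorem7:
  fixes V :: "'a set" and A :: "('a \<times> 'a) set" and lam :: "'a \<times> 'a \<Rightarrow> nat set"
    and tmax :: nat and cs :: "'a list"
  assumes "temporal_oriented_tree V A lam tmax"
    and "induced_cycle V (conn_graph_edges V A lam) cs"
    and "length cs \<ge> 4"
  shows "\<forall>v \<in> set cs. \<forall>a \<in> A. (v = fst a \<or> v = snd a) \<longrightarrow>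
           (\<forall>x \<in> set cs - {v}. \<forall>y \<in> set cs - {v}. (x, y) \<in> (und (A - {a}))\<^sup>*)"
proof (intro ballI impI)
  fix v a x y
  assume "v \<in> set cs" "v = fst a \<or> v = snd a" "x \<in> set cs - {v}" "y \<in> set cs - {v}"
  then obtain p where p: "p < length cs" "cs ! p = v" by (auto simp: in_set_conv_nth)
  show "(x, y) \<in> (und (A - {a}))\<^sup>*"
  proof (rule cycle_minus_vertex_rtrancl[OF sym_und p(1)])
    show "(cs ! i, cs ! (Suc i mod length cs)) \<in> (und (A - {a}))\<^sup>*"
      if "i < length cs" "i \<noteq> p" "Suc i mod length cs \<noteq> p" for i
      using induced_conn_cycle_consecutive_rtrancl[OF assms(2,3) p(1)] p \<open>v = fst a \<or> v = snd a\<close>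
        that by blast
  qed (use p \<open>x \<in> set cs - {v}\<close> \<open>y \<in> set cs - {v}\<close> in auto)
qed

end
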